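(* Let $H$ be a complex separable Hilbert space and let $\mathcal{G}$ be a countably infinite abelian group of unitary operators on $H$. Let $X = \{x_1,\dots,x_r\}$ and $Y = \{y_1,\dots,y_s\}$ be finite subsets of $H$ with $r < s$, let $V_0 = \overline{\mathrm{span}}\, \mathcal{G}(X)$ and $V_1 = \overline{\mathrm{span}}\, \mathcal{G}(Y)$, and assume $V_0 \subset V_1$. Let $W_0$ be a closed linear subspace of $V_1$ such that $V_0 + W_0 = V_1$ and $V_0 \cap W_0 = \{0\}$. Suppose that $\mathcal{G}(X)$ and $\mathcal{G}(Y)$ are frames for $V_0$ and $V_1$ respectively. Then there exists a finite subset $\Gamma = \{z_1,\dots,z_p\}$ of $W_0$ (for some positive integer $p$, not necessarily equal to $s-r$) such that $\mathcal{G}(\Gamma)$ is a frame for $W_0$ if and only if $g(W_0) \subseteq W_0$ for every $g \in \mathcal{G}$.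
   Context: For a finite set $S=\{v_1,\dots,v_k\}\subset H$, $\mathcal{G}(S)$ denotes the indexed family $\{g v_j : g \in \mathcal{G},\ j=1,\dots,k\}$. A countable indexed family $\{v_n\}_{n\in J}$ is a frame for its closed linear span $V$ if there are constants $0<A\le B$ with $A\|f\|^2 \le \sum_n |\langle f, v_n\rangle|^2 \le B\|f\|^2$ for all $f \in V$. *)

theory Defs
  imports "HOL-Analysis.Analysis"
begin

text \<open>HOL-Analysis only provides real inner product spaces,
so we introduce a type class of complex inner product spaces which are complete
(Banach) with respect to the norm induced by the complex inner product.
The inner product is linear in the first and conjugate linear in the second argument.\<close>

class chilbert_space = real_normed_vector + complete_space +
  fixes scaleC :: "complex \<Rightarrow> 'a \<Rightarrow> 'a" (infixr "*\<^sub>C" 75)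
    and cinner :: "'a \<Rightarrow> 'a \<Rightarrow> complex"
  assumes scaleC_add_right: "c *\<^sub>C (x + y) = c *\<^sub>C x + c *\<^sub>C y"
    and scaleC_add_left: "(c + d) *\<^sub>C x = c *\<^sub>C x + d *\<^sub>C x"
    and scaleC_scaleC: "c *\<^sub>C (d *\<^sub>C x) = (c * d) *\<^sub>C x"
    and scaleC_one: "1 *\<^sub>C x = x"
    and scaleR_scaleC: "scaleR r x = complex_of_real r *\<^sub>C x"
    and cinner_add_left: "cinner (x + y) z = cinner x z + cinner y z"
    and cinner_scaleC_left: "cinner (c *\<^sub>C x) y = c * cinner x y"
    and cinner_commute: "cinner x y = cnj (cinner y x)"
    and cinner_self_nonneg: "Im (cinner x x) = 0 \<and> Re (cinner x x) \<ge> 0"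
    and norm_eq_sqrt_cinner: "norm x = sqrt (Re (cinner x x))"

definition csubspace :: "'a::chilbert_space set \<Rightarrow> bool" where
  "csubspace V \<longleftrightarrow> 0 \<in> V \<and> (\<forall>x\<in>V. \<forall>y\<in>V. x + y \<in> V) \<and> (\<forall>c. \<forall>x\<in>V. c *\<^sub>C x \<in> V)"

definition cspan :: "'a::chilbert_space set \<Rightarrow> 'a set" where
  "cspan S = csubspace hull S"

definition closed_cspan :: "'a::chilbert_space set \<Rightarrow> 'a set" where
  "closed_cspan S = closure (cspan S)"

definition separable_space :: "'a::chilbert_space itself \<Rightarrow> bool" where
  "separable_space _ \<longleftrightarrow> (\<exists>D::'a set. countable D \<and> closure D = UNIV)"

definition clinear :: "('a::chilbert_space \<Rightarrow> 'a) \<Rightarrow> bool" where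
  "clinear f \<longleftrightarrow> (\<forall>x y. f (x + y) = f x + f y) \<and> (\<forall>c x. f (c *\<^sub>C x) = c *\<^sub>C f x)"

definition unitary :: "('a::chilbert_space \<Rightarrow> 'a) \<Rightarrow> bool" where
  "unitary U \<longleftrightarrow> clinear U \<and> bij U \<and> (\<forall>x y. cinner (U x) (U y) = cinner x y)"

definition abelian_unitary_group :: "('a::chilbert_space \<Rightarrow> 'a) set \<Rightarrow> bool" where
  "abelian_unitary_group G \<longleftrightarrow>
     (\<forall>g\<in>G. unitary g) \<and> id \<in> G \<and>
     (\<forall>g\<in>G. \<forall>h\<in>G. g \<circ> h \<in> G) \<and> (\<forall>g\<in>G. inv g \<in> G) \<and>
     (\<forall>g\<in>G. \<forall>h\<in>G. g \<circ> h = h \<circ> g)"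

text \<open>The indexed family G(S) = {g v_j : g in G, j = 1..k} for S = {v_1,...,v_k},
  indexed by G \<times> {1..k}.\<close>

definition orbit_index :: "('a \<Rightarrow> 'a) set \<Rightarrow> nat \<Rightarrow> (('a \<Rightarrow> 'a) \<times> nat) set" where
  "orbit_index G k = G \<times> {1..k}"

definition orbit_family :: "(nat \<Rightarrow> 'a) \<Rightarrow> ('a \<Rightarrow> 'a) \<times> nat \<Rightarrow> 'a" where
  "orbit_family v = (\<lambda>(g, j). g (v j))"

definition frame_for :: "'i set \<Rightarrow> ('i \<Rightarrow> 'a::chilbert_space) \<Rightarrow> 'a set \<Rightarrow> bool" where
  "frame_for J v V \<longleftrightarrow> countable J \<and> V = closed_cspan (v ` J) \<and>
     (\<exists>A B. 0 < A \<and> A \<le> B \<and>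
        (\<forall>f\<in>V. (\<lambda>n. (cmod (cinner f (v n)))\<^sup>2) summable_on J \<and>
               A * (norm f)\<^sup>2 \<le> (\<Sum>\<^sub>\<infinity>n\<in>J. (cmod (cinner f (v n)))\<^sup>2) \<and>
               (\<Sum>\<^sub>\<infinity>n\<in>J. (cmod (cinner f (v n)))\<^sup>2) \<le> B * (norm f)\<^sup>2))"

end

theory Submission
  imports Defs
begin

text \<open>If G(\<Gamma>) is a frame for W0, then W0 is the closed span of a G-invariant set, and
  unitaries are continuous and linear, so W0 is G-invariant. Conversely, let W0 be G-invariant
  and let z_j be the orthogonal projection of y_j onto W0. For f in W0 and g in G, invariance
  under g^-1 gives <f, g z_j> = <g^-1 f, z_j> = <g^-1 f, y_j> = <f, g y_j>, so on W0 the
  family G(z) has the frame coefficients of G(Y) and inherits its bounds; the lower bound also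
  forces G(z) to span W0 densely. Removing repetitions among the z_j changes the frame bounds
  at most by the number of repetitions. Only the group structure, the frame property of G(Y)
  and W0 \<subseteq> V1 are used.\<close>

lemma scaleC_minus_one: "(-1) *\<^sub>C x = - x"
  using scaleR_scaleC[of "-1" x] by simp

lemma cinner_zero_left [simp]: "cinner 0 y = 0"
  using cinner_add_left[of 0 0 y] by simp

lemma cinner_add_right: "cinner x (y + z) = cinner x y + cinner x z"
  by (metis cinner_add_left cinner_commute complex_cnj_add)

lemma cinner_diff_left: "cinner (x - y) z = cinner x z - cinner y z"
  using cinner_add_left[of "x - y" y z] by simp

lemma cinner_diff_right: "cinner x (y - z) = cinner x y - cinner x z"
  by (metis cinner_commute cinner_diff_left complex_cnj_diff)

lemma cinner_scaleC_right: "cinner x (c *\<^sub>C y) = cnj c * cinner x y"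
  by (metis cinner_commute cinner_scaleC_left complex_cnj_mult)

lemma cinner_eq_zero_commute: "cinner x y = 0 \<longleftrightarrow> cinner y x = 0"
  by (metis cinner_commute complex_cnj_zero_iff)

lemma cinner_self: "cinner x x = complex_of_real ((norm x)\<^sup>2)"
  using cinner_self_nonneg[of x] norm_eq_sqrt_cinner[of x] by (simp add: complex_eq_iff)

lemma norm_scaleC: "norm (c *\<^sub>C x) = cmod c * norm x"
proof -
  have "complex_of_real ((norm (c *\<^sub>C x))\<^sup>2) = (c * cnj c) * complex_of_real ((norm x)\<^sup>2)"
    unfolding cinner_self[symmetric] cinner_scaleC_left cinner_scaleC_right by (simp add: mult_ac)
  also have "\<dots> = complex_of_real ((cmod c * norm x)\<^sup>2)"
    by (simp only: complex_norm_square[symmetric] of_real_mult[symmetric] power_mult_distrib)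
  finally show ?thesis
    by (simp add: power2_eq_iff_nonneg del: of_real_power)
qed

lemma norm_diff_projection_line:
  assumes "w \<noteq> 0"
  shows "(norm (u - (cinner u w / complex_of_real ((norm w)\<^sup>2)) *\<^sub>C w))\<^sup>2
           = (norm u)\<^sup>2 - (cmod (cinner u w))\<^sup>2 / (norm w)\<^sup>2"
proof -
  define a where "a = cinner u w"
  define n where "n = (norm w)\<^sup>2"
  have "n \<noteq> 0" using assms by (simp add: n_def)
  have a_cnj_a: "a * cnj a = complex_of_real ((cmod a)\<^sup>2)"
    by (rule complex_norm_square[symmetric])
  have "cinner (u - (a / n) *\<^sub>C w) (u - (a / n) *\<^sub>C w)
          = cinner u u - cnj (a / n) * a - (a / n) * cnj a + (a / n) * cnj (a / n) * n"
    using cinner_self[of w] cinner_commute[of w u]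
    unfolding cinner_diff_left cinner_diff_right cinner_scaleC_left cinner_scaleC_right
      a_def[symmetric] n_def[symmetric]
    by (simp add: algebra_simps)
  also have "\<dots> = complex_of_real ((norm u)\<^sup>2 - (cmod a)\<^sup>2 / n)"
    using \<open>n \<noteq> 0\<close> a_cnj_a by (simp add: cinner_self field_simps power2_eq_square)
  finally show ?thesis
    unfolding cinner_self a_def n_def of_real_eq_iff .
qed

lemma parallelogram_law:
  fixes a b :: "'a::chilbert_space"
  shows "(norm (a + b))\<^sup>2 + (norm (a - b))\<^sup>2 = 2 * (norm a)\<^sup>2 + 2 * (norm b)\<^sup>2"
proof -
  have "cinner (a + b) (a + b) + cinner (a - b) (a - b) = 2 * cinner a a + 2 * cinner b b"
    by (simp add: cinner_add_left cinner_add_right cinner_diff_left cinner_diff_right)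
  then have "complex_of_real ((norm (a + b))\<^sup>2 + (norm (a - b))\<^sup>2)
      = complex_of_real (2 * (norm a)\<^sup>2 + 2 * (norm b)\<^sup>2)"
    unfolding cinner_self by simp
  then show ?thesis
    by (simp only: of_real_eq_iff)
qed

lemma bounded_linear_scaleC: "bounded_linear (\<lambda>x::'a::chilbert_space. c *\<^sub>C x)"
proof (rule bounded_linear_intro[where K = "cmod c"])
  show "c *\<^sub>C (x + y) = c *\<^sub>C x + c *\<^sub>C y" for x y :: 'a
    by (rule scaleC_add_right)
  show "c *\<^sub>C (r *\<^sub>R x) = r *\<^sub>R (c *\<^sub>C x)" for r and x :: 'a
    by (simp add: scaleR_scaleC scaleC_scaleC mult.commute)
  show "norm (c *\<^sub>C x) \<le> norm x * cmod c" for x :: 'a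
    by (simp add: norm_scaleC mult.commute)
qed

lemma unitary_norm: "unitary g \<Longrightarrow> norm (g x) = norm x"
  unfolding unitary_def norm_eq_sqrt_cinner by simp

lemma bounded_linear_unitary:
  assumes "unitary g"
  shows "bounded_linear g"
proof (rule bounded_linear_intro[where K = 1])
  have "clinear g"
    using assms by (simp add: unitary_def)
  then show "g (x + y) = g x + g y" "g (r *\<^sub>R x) = r *\<^sub>R g x" for x y r
    by (simp_all add: clinear_def scaleR_scaleC)
  show "norm (g x) \<le> norm x * 1" for x
    using assms by (simp add: unitary_norm)
qed

lemma unitary_cinner_inv:
  assumes "unitary g"
  shows "cinner f (g x) = cinner (inv g f) x"
proof -
  have "g (inv g f) = f"
    using assms by (simp add: unitary_def bij_is_surj surj_f_inv_f)
  then have "cinner f (g x) = cinner (g (inv g f)) (g x)"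
    by simp
  also have "\<dots> = cinner (inv g f) x"
    using assms by (simp add: unitary_def)
  finally show ?thesis .
qed

lemma csubspace_diff:
  assumes "csubspace V" "x \<in> V" "y \<in> V"
  shows "x - y \<in> V"
proof -
  have "x + (-1) *\<^sub>C y \<in> V"
    using assms unfolding csubspace_def by blast
  then show ?thesis
    by (simp add: scaleC_minus_one)
qed

lemma csubspace_closure:
  assumes V: "csubspace V"
  shows "csubspace (closure V)"
  unfolding csubspace_def
proof (intro conjI ballI allI)
  show "0 \<in> closure V"
    using V closure_subset by (auto simp: csubspace_def)
next
  fix x y assume "x \<in> closure V" "y \<in> closure V"
  then obtain a b where "\<forall>n. a n \<in> V" "a \<longlonglongrightarrow> x" "\<forall>n. b n \<in> V" "b \<longlonglongrightarrow> y"
    unfolding closure_sequential by blast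
  then have "\<forall>n. a n + b n \<in> V" "(\<lambda>n. a n + b n) \<longlonglongrightarrow> x + y"
    using V by (auto simp: csubspace_def intro: tendsto_add)
  then show "x + y \<in> closure V"
    unfolding closure_sequential by (intro exI[where x = "\<lambda>n. a n + b n"]) simp
next
  fix c x assume "x \<in> closure V"
  then have "c *\<^sub>C x \<in> closure ((\<lambda>x. c *\<^sub>C x) ` V)"
    using closure_bounded_linear_image_subset[OF bounded_linear_scaleC] by blast
  moreover have "(\<lambda>x. c *\<^sub>C x) ` V \<subseteq> V"
    using V by (auto simp: csubspace_def)
  ultimately show "c *\<^sub>C x \<in> closure V"
    using closure_mono by blast
qed

lemma csubspace_cspan: "csubspace (cspan S)"
  unfolding cspan_def by (rule hull_in) (simp add: csubspace_def)

lemma csubspace_closed_cspan: "csubspace (closed_cspan S)"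
  unfolding closed_cspan_def by (intro csubspace_closure csubspace_cspan)

lemma closed_closed_cspan: "closed (closed_cspan S)"
  unfolding closed_cspan_def by simp

lemma closed_cspan_superset: "S \<subseteq> closed_cspan S"
  unfolding closed_cspan_def cspan_def by (rule order_trans[OF hull_subset closure_subset])

lemma closed_cspan_minimal: "S \<subseteq> V \<Longrightarrow> csubspace V \<Longrightarrow> closed V \<Longrightarrow> closed_cspan S \<subseteq> V"
  unfolding closed_cspan_def cspan_def by (meson closure_minimal hull_minimal)

lemma csubspace_vimage:
  assumes f: "clinear f" and V: "csubspace V"
  shows "csubspace (f -` V)"
proof -
  have "f (0 + 0) = f 0 + f 0"
    using f unfolding clinear_def by blast
  then have "f 0 = 0"
    by simp
  then show ?thesis
    using f V by (simp add: csubspace_def clinear_def)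
qed

lemma closed_cspan_image_subset:
  assumes f: "clinear f" "continuous_on UNIV f" and ST: "f ` S \<subseteq> T"
  shows "f ` closed_cspan S \<subseteq> closed_cspan T"
proof -
  have "cspan S \<subseteq> f -` cspan T"
    unfolding cspan_def
    using ST hull_subset[of T] csubspace_vimage[OF f(1) csubspace_cspan]
    by (intro hull_minimal) (auto simp: cspan_def)
  then have "f ` cspan S \<subseteq> closed_cspan T"
    using closure_subset by (auto simp: closed_cspan_def)
  then show ?thesis
    unfolding closed_cspan_def
    by (intro image_closure_subset continuous_on_subset[OF f(2)] closed_closure) auto
qed

lemma Cauchy_if_norm_diff_le:
  fixes m :: "nat \<Rightarrow> 'a::real_normed_vector"
  assumes m_dist: "\<And>i j. (norm (m i - m j))\<^sup>2 \<le> 2 / real (Suc i) + 2 / real (Suc j)"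
  shows "Cauchy m"
proof (rule CauchyI)
  fix e :: real assume "0 < e"
  then obtain N where N: "inverse (real (Suc N)) < e\<^sup>2 / 4"
    using reals_Archimedean[of "e\<^sup>2 / 4"] by auto
  have "norm (m i - m j) < e" if "N \<le> i" "N \<le> j" for i j
  proof -
    have "2 / real (Suc i) \<le> 2 / real (Suc N)" "2 / real (Suc j) \<le> 2 / real (Suc N)"
      using that by (auto intro!: divide_left_mono)
    then have "(norm (m i - m j))\<^sup>2 \<le> 4 / real (Suc N)"
      using m_dist[of i j] by simp
    also have "\<dots> < e\<^sup>2"
      using N by (simp add: field_simps)
    finally show ?thesis
      using \<open>0 < e\<close> by (simp add: power_less_imp_less_base)
  qed
  then show "\<exists>N. \<forall>i\<ge>N. \<forall>j\<ge>N. norm (m i - m j) < e"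
    by blast
qed

text \<open>The midpoint of a and b lies in M, so it is at distance at least d from y; the
  parallelogram law for y - a and y - b does the rest.\<close>

lemma csubspace_norm_diff_le_excess:
  assumes M: "csubspace M" "a \<in> M" "b \<in> M"
    and d: "0 \<le> d" "\<And>w. w \<in> M \<Longrightarrow> d \<le> norm (y - w)"
  shows "(norm (a - b))\<^sup>2 \<le> 2 * ((norm (y - a))\<^sup>2 - d\<^sup>2) + 2 * ((norm (y - b))\<^sup>2 - d\<^sup>2)"
proof -
  have "(1/2) *\<^sub>R (a + b) \<in> M"
    using M by (simp add: csubspace_def scaleR_scaleC)
  moreover have "y - a + (y - b) = 2 *\<^sub>R (y - (1/2) *\<^sub>R (a + b))"
    by (simp add: algebra_simps scaleR_2)
  ultimately have "2 * d \<le> norm (y - a + (y - b))"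
    using d(2) by simp
  then have "4 * d\<^sup>2 \<le> (norm (y - a + (y - b)))\<^sup>2"
    using d(1) power_mono[of "2 * d" _ 2] by (simp add: power_mult_distrib)
  moreover have "norm (y - a - (y - b)) = norm (a - b)"
    by (simp add: norm_minus_commute)
  ultimately show ?thesis
    using parallelogram_law[of "y - a" "y - b"] by simp
qed

lemma csubspace_closest_point_exists:
  assumes M: "csubspace M" "closed M"
  shows "\<exists>l\<in>M. \<forall>w\<in>M. norm (y - l) \<le> norm (y - w)"
proof -
  define d where "d = (INF m\<in>M. norm (y - m))"
  have M_ne: "M \<noteq> {}"
    using M(1) by (auto simp: csubspace_def)
  have bdd: "bdd_below ((\<lambda>m. norm (y - m)) ` M)"
    by (intro bdd_belowI2[where m = 0]) auto
  have d_le: "d \<le> norm (y - w)" if "w \<in> M" for w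
    unfolding d_def using that bdd by (intro cINF_lower)
  have "0 \<le> d"
    unfolding d_def using M_ne by (intro cINF_greatest) auto
  have "\<exists>m\<in>M. (norm (y - m))\<^sup>2 < d\<^sup>2 + 1 / real (Suc n)" for n
  proof -
    have "d < sqrt (d\<^sup>2 + 1 / real (Suc n))"
      using \<open>0 \<le> d\<close> by (intro real_less_rsqrt) simp
    then obtain m where "m \<in> M" "norm (y - m) < sqrt (d\<^sup>2 + 1 / real (Suc n))"
      using cINF_less_iff[OF M_ne bdd] unfolding d_def by blast
    moreover from this(2) have "(norm (y - m))\<^sup>2 < (sqrt (d\<^sup>2 + 1 / real (Suc n)))\<^sup>2"
      by (intro power_strict_mono) auto
    ultimately show ?thesis
      by auto
  qed
  then obtain m where m_in: "\<And>n. m n \<in> M"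
    and m_close: "\<And>n. (norm (y - m n))\<^sup>2 < d\<^sup>2 + 1 / real (Suc n)"
    by metis
  have "Cauchy m"
  proof (rule Cauchy_if_norm_diff_le)
    fix i j
    show "(norm (m i - m j))\<^sup>2 \<le> 2 / real (Suc i) + 2 / real (Suc j)"
      using csubspace_norm_diff_le_excess[OF M(1) m_in m_in \<open>0 \<le> d\<close> d_le, of i j]
        m_close[of i] m_close[of j] by simp
  qed
  then obtain l where l: "m \<longlonglongrightarrow> l"
    using Cauchy_convergent_iff convergent_def by blast
  have "l \<in> M"
    using closed_sequentially[OF M(2)] m_in l by blast
  have "(\<lambda>n. (norm (y - m n))\<^sup>2) \<longlonglongrightarrow> (norm (y - l))\<^sup>2"
    by (intro tendsto_intros l)
  moreover have "(\<lambda>n. d\<^sup>2 + 1 / real (Suc n)) \<longlonglongrightarrow> d\<^sup>2"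
    using tendsto_add[OF tendsto_const LIMSEQ_inverse_real_of_nat] by (simp add: inverse_eq_divide)
  ultimately have "(norm (y - l))\<^sup>2 \<le> d\<^sup>2"
    by (rule LIMSEQ_le) (use less_imp_le[OF m_close] in auto)
  then have "norm (y - l) \<le> d"
    using \<open>0 \<le> d\<close> by (rule power2_le_imp_le)
  then show ?thesis
    using \<open>l \<in> M\<close> d_le by force
qed

lemma closest_point_orthogonal:
  assumes M: "csubspace M" and l: "l \<in> M" "\<And>w. w \<in> M \<Longrightarrow> norm (y - l) \<le> norm (y - w)"
    and w: "w \<in> M"
  shows "cinner w (y - l) = 0"
proof (cases "w = 0")
  case False
  define t where "t = cinner (y - l) w / complex_of_real ((norm w)\<^sup>2)"
  have "l + t *\<^sub>C w \<in> M"
    using M l(1) w by (simp add: csubspace_def)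
  then have "norm (y - l) \<le> norm (y - l - t *\<^sub>C w)"
    using l(2) by (simp add: diff_diff_eq)
  then have "(norm (y - l))\<^sup>2 \<le> (norm (y - l - t *\<^sub>C w))\<^sup>2"
    by (rule power_mono) simp
  also have "\<dots> = (norm (y - l))\<^sup>2 - (cmod (cinner (y - l) w))\<^sup>2 / (norm w)\<^sup>2"
    unfolding t_def by (rule norm_diff_projection_line[OF False])
  finally have "(cmod (cinner (y - l) w))\<^sup>2 / (norm w)\<^sup>2 \<le> 0"
    by simp
  then have "cinner (y - l) w = 0"
    using False by (simp add: divide_le_0_iff)
  then show ?thesis
    by (simp add: cinner_eq_zero_commute)
qed simp

lemma orthogonal_projection_exists:
  assumes "csubspace M" "closed M"
  shows "\<exists>l\<in>M. \<forall>w\<in>M. cinner w (y - l) = 0"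
  using csubspace_closest_point_exists[OF assms] closest_point_orthogonal[OF assms(1)] by blast

lemma has_sum_times_finite:
  fixes f :: "'a \<times> 'b \<Rightarrow> 'c::topological_comm_monoid_add"
  assumes "finite I" and "\<And>i. i \<in> I \<Longrightarrow> ((\<lambda>a. f (a, i)) has_sum S i) A"
  shows "(f has_sum (\<Sum>i\<in>I. S i)) (A \<times> I)"
proof -
  have "(f has_sum S i) ((\<lambda>a. (a, i)) ` A)" if "i \<in> I" for i
    using assms(2)[OF that] by (subst has_sum_reindex) (auto simp: inj_on_def o_def)
  then have "(f has_sum (\<Sum>i\<in>I. S i)) (\<Union>i\<in>I. (\<lambda>a. (a, i)) ` A)"
    using assms(1) by (intro sum_has_sum) auto
  also have "(\<Union>i\<in>I. (\<lambda>a. (a, i)) ` A) = A \<times> I"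
    by auto
  finally show ?thesis .
qed

lemma sum_le_card_mult_sum_image:
  fixes g :: "'b \<Rightarrow> 'c::{semiring_1,ordered_comm_monoid_add}"
  assumes "finite I" and "\<And>i. i \<in> I \<Longrightarrow> 0 \<le> g (f i)"
  shows "(\<Sum>i\<in>I. g (f i)) \<le> of_nat (card I) * sum g (f ` I)"
proof (rule sum_bounded_above)
  fix i assume "i \<in> I"
  then show "g (f i) \<le> sum g (f ` I)"
    using assms by (intro member_le_sum) auto
qed

lemma orbit_family_image: "orbit_family v ` orbit_index G k = (\<Union>g\<in>G. g ` v ` {1..k})"
  by (force simp: orbit_family_def orbit_index_def)

lemma countable_orbit_index_iff:
  assumes "0 < k"
  shows "countable (orbit_index G k) \<longleftrightarrow> countable G"
proof
  assume "countable (orbit_index G k)"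
  moreover have "G = fst ` orbit_index G k"
    using assms by (force simp: orbit_index_def)
  ultimately show "countable G"
    by (metis countable_image)
next
  assume "countable G"
  then show "countable (orbit_index G k)"
    by (simp add: orbit_index_def)
qed

lemma has_sum_orbit_index:
  fixes F :: "'a \<Rightarrow> 'b::topological_comm_monoid_add"
  assumes "\<And>j. j \<in> {1..k} \<Longrightarrow> ((\<lambda>g. F (g (v j))) has_sum S j) G"
  shows "((\<lambda>n. F (orbit_family v n)) has_sum (\<Sum>j=1..k. S j)) (orbit_index G k)"
  using has_sum_times_finite[where I = "{1..k}" and f = "\<lambda>n. F (orbit_family v n)" and A = G] assms
  by (simp add: orbit_index_def orbit_family_def)

lemma summable_on_orbit_index_iff:
  fixes F :: "'a \<Rightarrow> 'b::banach"
  shows "(\<lambda>n. F (orbit_family v n)) summable_on orbit_index G k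
           \<longleftrightarrow> (\<forall>j\<in>{1..k}. (\<lambda>g. F (g (v j))) summable_on G)"
proof
  assume summable: "(\<lambda>n. F (orbit_family v n)) summable_on orbit_index G k"
  show "\<forall>j\<in>{1..k}. (\<lambda>g. F (g (v j))) summable_on G"
  proof
    fix j assume j: "j \<in> {1..k}"
    have "(\<lambda>n. F (orbit_family v n)) summable_on (\<lambda>g. (g, j)) ` G"
      using summable by (rule summable_on_subset_banach) (use j in \<open>auto simp: orbit_index_def\<close>)
    then show "(\<lambda>g. F (g (v j))) summable_on G"
      by (subst (asm) summable_on_reindex) (auto simp: inj_on_def o_def orbit_family_def)
  qed
next
  assume "\<forall>j\<in>{1..k}. (\<lambda>g. F (g (v j))) summable_on G"
  then have "((\<lambda>n. F (orbit_family v n)) has_sum (\<Sum>j=1..k. \<Sum>\<^sub>\<infinity>g\<in>G. F (g (v j)))) (orbit_index G k)"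
    by (intro has_sum_orbit_index has_sum_infsum) auto
  then show "(\<lambda>n. F (orbit_family v n)) summable_on orbit_index G k"
    by (rule has_sum_imp_summable)
qed

lemma infsum_orbit_index:
  fixes F :: "'a \<Rightarrow> 'b::banach"
  assumes "(\<lambda>n. F (orbit_family v n)) summable_on orbit_index G k"
  shows "(\<Sum>\<^sub>\<infinity>n\<in>orbit_index G k. F (orbit_family v n)) = (\<Sum>j=1..k. \<Sum>\<^sub>\<infinity>g\<in>G. F (g (v j)))"
  using assms by (intro infsumI has_sum_orbit_index has_sum_infsum) (auto simp: summable_on_orbit_index_iff)

text \<open>Writing \<Phi> w for the sum of F over the G-orbit of w, both sides are sums of \<Phi> over
  lists of generators with the same underlying set, in which each generator occurs at least
  once and at most as often as the length of the list.\<close>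

lemma orbit_sums_same_image:
  fixes F :: "'a \<Rightarrow> real"
  assumes F: "\<And>w. 0 \<le> F w" and img: "z ` {1..p} = u ` {1..s}"
    and summable: "(\<lambda>n. F (orbit_family u n)) summable_on orbit_index G s"
  shows "(\<lambda>n. F (orbit_family z n)) summable_on orbit_index G p"
    and "(\<Sum>\<^sub>\<infinity>n\<in>orbit_index G s. F (orbit_family u n))
           \<le> real s * (\<Sum>\<^sub>\<infinity>n\<in>orbit_index G p. F (orbit_family z n))"
    and "(\<Sum>\<^sub>\<infinity>n\<in>orbit_index G p. F (orbit_family z n))
           \<le> real p * (\<Sum>\<^sub>\<infinity>n\<in>orbit_index G s. F (orbit_family u n))"
proof -
  define \<Phi> where "\<Phi> w = (\<Sum>\<^sub>\<infinity>g\<in>G. F (g w))" for w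
  have \<Phi>_nonneg: "0 \<le> \<Phi> w" for w
    unfolding \<Phi>_def using F by (simp add: infsum_nonneg)
  have summable_u: "\<forall>j\<in>{1..s}. (\<lambda>g. F (g (u j))) summable_on G"
    using summable unfolding summable_on_orbit_index_iff .
  have "(\<lambda>g. F (g (z k))) summable_on G" if "k \<in> {1..p}" for k
  proof -
    have "z k \<in> u ` {1..s}"
      using img that by blast
    then obtain j where "j \<in> {1..s}" "z k = u j"
      by blast
    then show ?thesis
      using summable_u by simp
  qed
  then show summable_z: "(\<lambda>n. F (orbit_family z n)) summable_on orbit_index G p"
    by (simp add: summable_on_orbit_index_iff)
  define T where "T = sum \<Phi> (u ` {1..s})"
  have sum_u: "(\<Sum>\<^sub>\<infinity>n\<in>orbit_index G s. F (orbit_family u n)) = (\<Sum>j=1..s. \<Phi> (u j))"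
    unfolding \<Phi>_def by (rule infsum_orbit_index[OF summable])
  have sum_z: "(\<Sum>\<^sub>\<infinity>n\<in>orbit_index G p. F (orbit_family z n)) = (\<Sum>k=1..p. \<Phi> (z k))"
    unfolding \<Phi>_def by (rule infsum_orbit_index[OF summable_z])
  have "T \<le> (\<Sum>j=1..s. \<Phi> (u j))" "T \<le> (\<Sum>k=1..p. \<Phi> (z k))"
    using sum_image_le[of "{1..s}" \<Phi> u] sum_image_le[of "{1..p}" \<Phi> z] img \<Phi>_nonneg
    by (simp_all add: T_def o_def)
  moreover have "(\<Sum>j=1..s. \<Phi> (u j)) \<le> real s * T" "(\<Sum>k=1..p. \<Phi> (z k)) \<le> real p * T"
    using sum_le_card_mult_sum_image[of "{1..s}" \<Phi> u] sum_le_card_mult_sum_image[of "{1..p}" \<Phi> z]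
      img \<Phi>_nonneg by (simp_all add: T_def)
  ultimately show "(\<Sum>\<^sub>\<infinity>n\<in>orbit_index G s. F (orbit_family u n))
           \<le> real s * (\<Sum>\<^sub>\<infinity>n\<in>orbit_index G p. F (orbit_family z n))"
    and "(\<Sum>\<^sub>\<infinity>n\<in>orbit_index G p. F (orbit_family z n))
           \<le> real p * (\<Sum>\<^sub>\<infinity>n\<in>orbit_index G s. F (orbit_family u n))"
    unfolding sum_u sum_z by (smt (verit) mult_left_mono of_nat_0_le_iff)+
qed

lemma frame_forI:
  assumes "countable J" "V = closed_cspan (v ` J)" "0 < A" "A \<le> B"
    and "\<And>f. f \<in> V \<Longrightarrow> (\<lambda>n. (cmod (cinner f (v n)))\<^sup>2) summable_on J"
    and "\<And>f. f \<in> V \<Longrightarrow> A * (norm f)\<^sup>2 \<le> (\<Sum>\<^sub>\<infinity>n\<in>J. (cmod (cinner f (v n)))\<^sup>2)"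
    and "\<And>f. f \<in> V \<Longrightarrow> (\<Sum>\<^sub>\<infinity>n\<in>J. (cmod (cinner f (v n)))\<^sup>2) \<le> B * (norm f)\<^sup>2"
  shows "frame_for J v V"
  using assms unfolding frame_for_def by blast

lemma frame_forE:
  assumes "frame_for J v V"
  obtains A B where "countable J" "V = closed_cspan (v ` J)" "0 < A" "A \<le> B"
    and "\<And>f. f \<in> V \<Longrightarrow> (\<lambda>n. (cmod (cinner f (v n)))\<^sup>2) summable_on J"
    and "\<And>f. f \<in> V \<Longrightarrow> A * (norm f)\<^sup>2 \<le> (\<Sum>\<^sub>\<infinity>n\<in>J. (cmod (cinner f (v n)))\<^sup>2)"
    and "\<And>f. f \<in> V \<Longrightarrow> (\<Sum>\<^sub>\<infinity>n\<in>J. (cmod (cinner f (v n)))\<^sup>2) \<le> B * (norm f)\<^sup>2"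
proof -
  obtain A B where "countable J" "V = closed_cspan (v ` J)" "0 < A" "A \<le> B"
    and bounds: "\<forall>f\<in>V. (\<lambda>n. (cmod (cinner f (v n)))\<^sup>2) summable_on J \<and>
        A * (norm f)\<^sup>2 \<le> (\<Sum>\<^sub>\<infinity>n\<in>J. (cmod (cinner f (v n)))\<^sup>2) \<and>
        (\<Sum>\<^sub>\<infinity>n\<in>J. (cmod (cinner f (v n)))\<^sup>2) \<le> B * (norm f)\<^sup>2"
    using assms unfolding frame_for_def by blast
  then show thesis
    by (intro that[of A B]) auto
qed

lemma frame_for_orbit_family_same_image:
  assumes frame: "frame_for (orbit_index G s) (orbit_family u) W" and "0 < s"
    and img: "z ` {1..p} = u ` {1..s}"
  shows "frame_for (orbit_index G p) (orbit_family z) W"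
proof -
  obtain A B where countable: "countable (orbit_index G s)"
    and W: "W = closed_cspan (orbit_family u ` orbit_index G s)" and AB: "0 < A" "A \<le> B"
    and summable: "\<And>f. f \<in> W \<Longrightarrow> (\<lambda>n. (cmod (cinner f (orbit_family u n)))\<^sup>2) summable_on orbit_index G s"
    and lower: "\<And>f. f \<in> W \<Longrightarrow>
      A * (norm f)\<^sup>2 \<le> (\<Sum>\<^sub>\<infinity>n\<in>orbit_index G s. (cmod (cinner f (orbit_family u n)))\<^sup>2)"
    and upper: "\<And>f. f \<in> W \<Longrightarrow>
      (\<Sum>\<^sub>\<infinity>n\<in>orbit_index G s. (cmod (cinner f (orbit_family u n)))\<^sup>2) \<le> B * (norm f)\<^sup>2"
    using frame by (rule frame_forE) (rule that)
  have "0 < p"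
    using img \<open>0 < s\<close> by (cases p) auto
  have "countable (orbit_index G p)"
    using countable \<open>0 < s\<close> \<open>0 < p\<close> by (simp add: countable_orbit_index_iff)
  moreover have "orbit_family z ` orbit_index G p = orbit_family u ` orbit_index G s"
    unfolding orbit_family_image img ..
  moreover have "0 < A / real s" "A / real s \<le> real p * B"
  proof -
    have "1 \<le> real s" "1 \<le> real p"
      using \<open>0 < s\<close> \<open>0 < p\<close> by simp_all
    then have "A / real s \<le> A" "B \<le> real p * B"
      using AB by (simp_all add: divide_le_eq mult_le_cancel_left1 mult_le_cancel_right1)
    then show "A / real s \<le> real p * B"
      using AB by linarith
    show "0 < A / real s"
      using AB \<open>0 < s\<close> by simp
  qed
  moreover have
      "(\<lambda>n. (cmod (cinner f (orbit_family z n)))\<^sup>2) summable_on orbit_index G p"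
      "A / real s * (norm f)\<^sup>2 \<le> (\<Sum>\<^sub>\<infinity>n\<in>orbit_index G p. (cmod (cinner f (orbit_family z n)))\<^sup>2)"
      "(\<Sum>\<^sub>\<infinity>n\<in>orbit_index G p. (cmod (cinner f (orbit_family z n)))\<^sup>2) \<le> real p * B * (norm f)\<^sup>2"
    if "f \<in> W" for f
  proof -
    note sums = orbit_sums_same_image[where F = "\<lambda>w. (cmod (cinner f w))\<^sup>2", OF _ img summable[OF that]]
    show "(\<lambda>n. (cmod (cinner f (orbit_family z n)))\<^sup>2) summable_on orbit_index G p"
      using sums(1) by simp
    have "A * (norm f)\<^sup>2 \<le> real s * (\<Sum>\<^sub>\<infinity>n\<in>orbit_index G p. (cmod (cinner f (orbit_family z n)))\<^sup>2)"
      using lower[OF that] sums(2) by simp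
    then show "A / real s * (norm f)\<^sup>2 \<le> (\<Sum>\<^sub>\<infinity>n\<in>orbit_index G p. (cmod (cinner f (orbit_family z n)))\<^sup>2)"
      using \<open>0 < s\<close> by (simp add: field_simps)
    have "real p * (\<Sum>\<^sub>\<infinity>n\<in>orbit_index G s. (cmod (cinner f (orbit_family u n)))\<^sup>2)
        \<le> real p * (B * (norm f)\<^sup>2)"
      using upper[OF that] by (rule mult_left_mono) simp
    then show "(\<Sum>\<^sub>\<infinity>n\<in>orbit_index G p. (cmod (cinner f (orbit_family z n)))\<^sup>2) \<le> real p * B * (norm f)\<^sup>2"
      using sums(3) by simp
  qed
  ultimately show ?thesis
    by (intro frame_forI[where A = "A / real s" and B = "real p * B"]) (auto simp: W)
qed

text \<open>The lower frame bound forces the new family to span W densely: the component of an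
  element of W orthogonal to that span has vanishing frame coefficients.\<close>

lemma frame_for_subspace_same_coefficients:
  assumes frame: "frame_for J v V"
    and W: "csubspace W" "closed W" "W \<subseteq> V" and wW: "w ` J \<subseteq> W"
    and same: "\<And>f n. f \<in> W \<Longrightarrow> n \<in> J \<Longrightarrow> cinner f (w n) = cinner f (v n)"
  shows "frame_for J w W"
proof -
  obtain A B where countable: "countable J" and AB: "0 < A" "A \<le> B"
    and summable: "\<And>f. f \<in> V \<Longrightarrow> (\<lambda>n. (cmod (cinner f (v n)))\<^sup>2) summable_on J"
    and lower: "\<And>f. f \<in> V \<Longrightarrow> A * (norm f)\<^sup>2 \<le> (\<Sum>\<^sub>\<infinity>n\<in>J. (cmod (cinner f (v n)))\<^sup>2)"
    and upper: "\<And>f. f \<in> V \<Longrightarrow> (\<Sum>\<^sub>\<infinity>n\<in>J. (cmod (cinner f (v n)))\<^sup>2) \<le> B * (norm f)\<^sup>2"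
    using frame by (rule frame_forE) (rule that)
  have "(\<lambda>n. (cmod (cinner f (w n)))\<^sup>2) summable_on J"
      "A * (norm f)\<^sup>2 \<le> (\<Sum>\<^sub>\<infinity>n\<in>J. (cmod (cinner f (w n)))\<^sup>2)"
      "(\<Sum>\<^sub>\<infinity>n\<in>J. (cmod (cinner f (w n)))\<^sup>2) \<le> B * (norm f)\<^sup>2"
    if "f \<in> W" for f
  proof -
    have "f \<in> V"
      using W(3) that by blast
    have "(\<lambda>n. (cmod (cinner f (w n)))\<^sup>2) summable_on J
        \<longleftrightarrow> (\<lambda>n. (cmod (cinner f (v n)))\<^sup>2) summable_on J"
      using same[OF that] by (intro summable_on_cong) simp
    moreover have "(\<Sum>\<^sub>\<infinity>n\<in>J. (cmod (cinner f (w n)))\<^sup>2) = (\<Sum>\<^sub>\<infinity>n\<in>J. (cmod (cinner f (v n)))\<^sup>2)"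
      using same[OF that] by (intro infsum_cong) simp
    ultimately show "(\<lambda>n. (cmod (cinner f (w n)))\<^sup>2) summable_on J"
      "A * (norm f)\<^sup>2 \<le> (\<Sum>\<^sub>\<infinity>n\<in>J. (cmod (cinner f (w n)))\<^sup>2)"
      "(\<Sum>\<^sub>\<infinity>n\<in>J. (cmod (cinner f (w n)))\<^sup>2) \<le> B * (norm f)\<^sup>2"
      using summable[OF \<open>f \<in> V\<close>] lower[OF \<open>f \<in> V\<close>] upper[OF \<open>f \<in> V\<close>] by simp_all
  qed
  note bounds = this
  have "W \<subseteq> closed_cspan (w ` J)"
  proof
    fix f assume "f \<in> W"
    obtain l where l: "l \<in> closed_cspan (w ` J)" "\<And>x. x \<in> closed_cspan (w ` J) \<Longrightarrow> cinner x (f - l) = 0"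
      using orthogonal_projection_exists[OF csubspace_closed_cspan closed_closed_cspan] by blast
    have "l \<in> W"
      using closed_cspan_minimal[OF wW W(1,2)] l(1) by blast
    then have "f - l \<in> W"
      by (rule csubspace_diff[OF W(1) \<open>f \<in> W\<close>])
    have "cinner (f - l) (w n) = 0" if "n \<in> J" for n
    proof -
      have "w n \<in> closed_cspan (w ` J)"
        using closed_cspan_superset[of "w ` J"] that by blast
      then show ?thesis
        by (rule cinner_eq_zero_commute[THEN iffD2, OF l(2)])
    qed
    then have "(\<Sum>\<^sub>\<infinity>n\<in>J. (cmod (cinner (f - l) (w n)))\<^sup>2) = 0"
      by (simp add: infsum_0)
    then have "A * (norm (f - l))\<^sup>2 \<le> 0"
      using bounds(2)[OF \<open>f - l \<in> W\<close>] by simp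
    then have "f = l"
      using AB(1) by (simp add: mult_le_0_iff)
    then show "f \<in> closed_cspan (w ` J)"
      using l(1) by simp
  qed
  moreover have "closed_cspan (w ` J) \<subseteq> W"
    by (rule closed_cspan_minimal[OF wW W(1,2)])
  ultimately show ?thesis
    using countable AB bounds by (intro frame_forI[where A = A and B = B]) auto
qed

lemma frame_for_projected_orbit:
  assumes G: "abelian_unitary_group G" and invariant: "\<forall>g\<in>G. g ` W \<subseteq> W"
    and W: "csubspace W" "closed W" "W \<subseteq> V"
    and frame: "frame_for (orbit_index G s) (orbit_family y) V"
  obtains z where "z ` {1..s} \<subseteq> W" "frame_for (orbit_index G s) (orbit_family z) W"
proof -
  have "\<forall>j. \<exists>l\<in>W. \<forall>w\<in>W. cinner w (y j - l) = 0"
    using orthogonal_projection_exists[OF W(1,2)] by blast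
  then obtain z where z: "\<And>j. z j \<in> W" "\<And>j w. w \<in> W \<Longrightarrow> cinner w (y j - z j) = 0"
    by metis
  have "cinner f (g (z j)) = cinner f (g (y j))" if "f \<in> W" "g \<in> G" for f g j
  proof -
    have "unitary g" "inv g \<in> G"
      using G \<open>g \<in> G\<close> by (simp_all add: abelian_unitary_group_def)
    then have "inv g f \<in> W"
      using invariant \<open>f \<in> W\<close> by blast
    have "cinner f (g (z j)) = cinner (inv g f) (z j)"
      using \<open>unitary g\<close> by (rule unitary_cinner_inv)
    also have "\<dots> = cinner (inv g f) (y j)"
      using z(2)[OF \<open>inv g f \<in> W\<close>] by (simp add: cinner_diff_right)
    also have "\<dots> = cinner f (g (y j))"
      using \<open>unitary g\<close> by (rule unitary_cinner_inv[symmetric])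
    finally show ?thesis .
  qed
  then have "cinner f (orbit_family z n) = cinner f (orbit_family y n)"
    if "f \<in> W" "n \<in> orbit_index G s" for f n
    using that by (auto simp: orbit_family_def orbit_index_def)
  moreover have "orbit_family z ` orbit_index G s \<subseteq> W"
    using invariant z(1) by (auto simp: orbit_family_def orbit_index_def)
  ultimately have "frame_for (orbit_index G s) (orbit_family z) W"
    by (intro frame_for_subspace_same_coefficients[OF frame W])
  then show thesis
    using z(1) that by blast
qed

lemma closed_cspan_orbit_invariant:
  assumes G: "abelian_unitary_group G" and "g \<in> G"
  shows "g ` closed_cspan (orbit_family z ` orbit_index G p)
           \<subseteq> closed_cspan (orbit_family z ` orbit_index G p)"
proof (rule closed_cspan_image_subset)
  have "unitary g"
    using assms by (simp add: abelian_unitary_group_def)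
  then show "clinear g"
    by (simp add: unitary_def)
  show "continuous_on UNIV g"
    using bounded_linear_unitary[OF \<open>unitary g\<close>] by (rule linear_continuous_on)
  have "g (h w) \<in> (\<Union>h\<in>G. h ` z ` {1..p})" if "h \<in> G" "w \<in> z ` {1..p}" for h w
  proof -
    have "g \<circ> h \<in> G"
      using G \<open>g \<in> G\<close> \<open>h \<in> G\<close> by (simp add: abelian_unitary_group_def)
    moreover have "g (h w) \<in> (g \<circ> h) ` z ` {1..p}"
      using \<open>w \<in> z ` {1..p}\<close> by (rule rev_image_eqI) simp
    ultimately show ?thesis
      by blast
  qed
  then show "g ` (orbit_family z ` orbit_index G p) \<subseteq> orbit_family z ` orbit_index G p"
    unfolding orbit_family_image by blast
qed

theorem theorem3p3:
  fixes G :: "('a::chilbert_space \<Rightarrow> 'a) set"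
    and x y :: "nat \<Rightarrow> 'a" and r s :: nat
    and W0 :: "'a set"
  assumes "separable_space TYPE('a)"
    and "abelian_unitary_group G" and "countable G" and "infinite G"
    and "inj_on x {1..r}" and "inj_on y {1..s}" and "r < s"
    and "closed_cspan (orbit_family x ` orbit_index G r)
           \<subseteq> closed_cspan (orbit_family y ` orbit_index G s)"
    and "csubspace W0" and "closed W0"
    and "W0 \<subseteq> closed_cspan (orbit_family y ` orbit_index G s)"
    and "{a + b | a b. a \<in> closed_cspan (orbit_family x ` orbit_index G r) \<and> b \<in> W0}
           = closed_cspan (orbit_family y ` orbit_index G s)"
    and "closed_cspan (orbit_family x ` orbit_index G r) \<inter> W0 = {0}"
    and "frame_for (orbit_index G r) (orbit_family x)
           (closed_cspan (orbit_family x ` orbit_index G r))"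
    and "frame_for (orbit_index G s) (orbit_family y)
           (closed_cspan (orbit_family y ` orbit_index G s))"
  shows "(\<exists>p::nat. \<exists>z::nat \<Rightarrow> 'a. 0 < p \<and> inj_on z {1..p} \<and> z ` {1..p} \<subseteq> W0 \<and>
            frame_for (orbit_index G p) (orbit_family z) W0)
         \<longleftrightarrow> (\<forall>g\<in>G. g ` W0 \<subseteq> W0)"
proof
  assume "\<exists>p z. 0 < p \<and> inj_on z {1..p} \<and> z ` {1..p} \<subseteq> W0 \<and>
            frame_for (orbit_index G p) (orbit_family z) W0"
  then obtain p z where "W0 = closed_cspan (orbit_family z ` orbit_index G p)"
    by (auto simp: frame_for_def)
  then show "\<forall>g\<in>G. g ` W0 \<subseteq> W0"
    using closed_cspan_orbit_invariant[OF assms(2)] by blast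
next
  assume "\<forall>g\<in>G. g ` W0 \<subseteq> W0"
  then obtain z0 where z0: "z0 ` {1..s} \<subseteq> W0" "frame_for (orbit_index G s) (orbit_family z0) W0"
    using frame_for_projected_orbit[OF assms(2) _ assms(9-11) assms(15)] by blast
  define p where "p = card (z0 ` {1..s})"
  obtain z where z: "bij_betw z {1..p} (z0 ` {1..s})"
    unfolding p_def using ex_bij_betw_nat_finite_1 by blast
  have "0 < s"
    using \<open>r < s\<close> by simp
  then have "0 < p"
    by (simp add: p_def card_gt_0_iff)
  moreover have "frame_for (orbit_index G p) (orbit_family z) W0"
    using frame_for_orbit_family_same_image[OF z0(2) \<open>0 < s\<close>] z by (simp add: bij_betw_def)
  moreover have "inj_on z {1..p}" "z ` {1..p} \<subseteq> W0"
    using z z0(1) by (simp_all add: bij_betw_def)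
  ultimately show "\<exists>p z. 0 < p \<and> inj_on z {1..p} \<and> z ` {1..p} \<subseteq> W0 \<and>
            frame_for (orbit_index G p) (orbit_family z) W0"
    by blast
qed

end
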